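(* Let $(X,d)$ be a compact metric space and $f\colon X\to X$ continuous. If $f$ has the limit shadowing property around $CR(f)$, then $f$ has the limit shadowing property.
   Context: A limit pseudo orbit is a sequence $(x_i)_{i\ge0}$ with $\lim_i d(f(x_i),x_{i+1})=0$. $f$ has the limit shadowing property around $S\subset X$ if every limit pseudo orbit contained in $S$ admits $y\in X$ with $\lim_i d(x_i,f^i(y))=0$; $f$ has the limit shadowing property if this holds with $S=X$. $CR(f)$ is the set of chain recurrent points: $x$ such that for every $\delta>0$ there is a finite sequence $x=z_0,\dots,z_k=x$ ($k\ge1$) with $d(f(z_i),z_{i+1})\le\delta$ for $0\le i<k$. *)

theory Defs
  imports "HOL-Analysis.Analysis"
begin

definition limit_pseudo_orbit :: "('a::metric_space \<Rightarrow> 'a) \<Rightarrow> (nat \<Rightarrow> 'a) \<Rightarrow> bool" where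
  "limit_pseudo_orbit f x \<longleftrightarrow> (\<lambda>i. dist (f (x i)) (x (Suc i))) \<longlonglongrightarrow> 0"

definition limit_shadowing_around :: "'a::metric_space set \<Rightarrow> ('a \<Rightarrow> 'a) \<Rightarrow> 'a set \<Rightarrow> bool" where
  "limit_shadowing_around X f S \<longleftrightarrow>
     (\<forall>x. (\<forall>i. x i \<in> S) \<and> limit_pseudo_orbit f x \<longrightarrow>
        (\<exists>y\<in>X. (\<lambda>i. dist (x i) ((f ^^ i) y)) \<longlonglongrightarrow> 0))"

definition limit_shadowing :: "'a::metric_space set \<Rightarrow> ('a \<Rightarrow> 'a) \<Rightarrow> bool" where
  "limit_shadowing X f \<longleftrightarrow> limit_shadowing_around X f X"

definition chain_recurrent_set :: "'a::metric_space set \<Rightarrow> ('a \<Rightarrow> 'a) \<Rightarrow> 'a set" where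
  "chain_recurrent_set X f = {x \<in> X. \<forall>\<delta>>0. \<exists>k\<ge>1. \<exists>z::nat \<Rightarrow> 'a.
      z 0 = x \<and> z k = x \<and> (\<forall>i\<le>k. z i \<in> X) \<and>
      (\<forall>i<k. dist (f (z i)) (z (Suc i)) \<le> \<delta>)}"

end

theory Submission
  imports Defs
begin

text \<open>Every accumulation point of a limit pseudo orbit is chain recurrent: between two
late visits of the orbit close to the point p there is a piece of the orbit with arbitrarily
small jumps, which becomes a \<delta>-chain from p to p after replacing its two ends by p.
By compactness a limit pseudo orbit therefore approaches CR(f), so it stays asymptotic to a
sequence in CR(f); by uniform continuity that sequence is again a limit pseudo orbit,
and any point shadowing it also shadows the original one.\<close>

lemma infdist_lessE:
  fixes A :: "'a::metric_space set"
  assumes "A \<noteq> {}" "infdist x A < t"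
  obtains a where "a \<in> A" "dist x a < t"
proof -
  have "(INF a\<in>A. dist x a) < t" using assms infdist_notempty by metis
  moreover have "bdd_below ((\<lambda>a. dist x a) ` A)" by (rule bdd_belowI[of _ 0]) auto
  ultimately show ?thesis using cINF_less_iff assms(1) that by metis
qed

lemma tendsto_dist_zero_trans:
  fixes a b c :: "nat \<Rightarrow> 'a::metric_space"
  assumes "(\<lambda>n. dist (a n) (b n)) \<longlonglongrightarrow> 0" "(\<lambda>n. dist (b n) (c n)) \<longlonglongrightarrow> 0"
  shows "(\<lambda>n. dist (a n) (c n)) \<longlonglongrightarrow> 0"
proof (rule real_tendsto_sandwich[of "\<lambda>_. 0" _ _ "\<lambda>n. dist (a n) (b n) + dist (b n) (c n)"])
  show "(\<lambda>n. dist (a n) (b n) + dist (b n) (c n)) \<longlonglongrightarrow> 0"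
    using tendsto_add_zero[OF assms] .
qed (auto intro: always_eventually dist_triangle)

lemma chain_recurrent_if_limit_of_subsequence:
  assumes cont: "continuous_on X f" and xX: "\<And>i. x i \<in> X"
    and po: "limit_pseudo_orbit f x"
    and s: "strict_mono s" and lim: "(x \<circ> s) \<longlonglongrightarrow> p" and pX: "p \<in> X"
  shows "p \<in> chain_recurrent_set X f"
  unfolding chain_recurrent_set_def
proof (intro CollectI conjI allI impI pX)
  fix \<delta> :: real assume "\<delta> > 0"
  define \<epsilon> where "\<epsilon> = \<delta> / 3"
  have "\<epsilon> > 0" using \<open>\<delta> > 0\<close> \<epsilon>_def by auto
  obtain \<eta> where "\<eta> > 0" and \<eta>: "\<And>y. y \<in> X \<Longrightarrow> dist y p < \<eta> \<Longrightarrow> dist (f y) (f p) < \<epsilon>"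
    using cont pX \<open>\<epsilon> > 0\<close> unfolding continuous_on_iff by metis
  obtain N where N: "\<And>i. i \<ge> N \<Longrightarrow> dist (f (x i)) (x (Suc i)) < \<epsilon>"
    using po \<open>\<epsilon> > 0\<close> unfolding limit_pseudo_orbit_def lim_sequentially by fastforce
  obtain K where K: "\<And>k. k \<ge> K \<Longrightarrow> dist (x (s k)) p < min \<eta> \<epsilon>"
    using lim \<open>\<eta> > 0\<close> \<open>\<epsilon> > 0\<close> unfolding lim_sequentially by (metis comp_apply min_less_iff_conj)
  define a where "a = s (max K N)"
  define b where "b = s (Suc (max K N))"
  have "N \<le> a" using seq_suble[OF s, of "max K N"] a_def by auto
  have "a < b" using s by (simp add: a_def b_def strict_mono_def)
  have xa: "dist (x a) p < min \<eta> \<epsilon>" and xb: "dist (x b) p < \<epsilon>"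
    using K[of "max K N"] K[of "Suc (max K N)"] by (auto simp: a_def b_def)
  define m where "m = b - a"
  define z where "z = (\<lambda>j. if j = 0 \<or> j = m then p else x (a + j))"
  have small_steps: "\<forall>j<m. dist (f (z j)) (z (Suc j)) \<le> \<delta>"
  proof (intro allI impI)
    fix j assume "j < m"
    have "dist (f (z j)) (f (x (a + j))) < \<epsilon>"
      using \<eta>[OF xX[of a]] xa \<open>\<epsilon> > 0\<close> \<open>j < m\<close> by (auto simp: z_def dist_commute)
    moreover have "dist (f (x (a + j))) (x (Suc (a + j))) < \<epsilon>"
      using N \<open>N \<le> a\<close> by simp
    moreover have "dist (x (Suc (a + j))) (z (Suc j)) < \<epsilon>"
    proof (cases "Suc j = m")
      case True
      then have "Suc (a + j) = b" using \<open>a < b\<close> by (simp add: m_def)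
      with True show ?thesis using xb by (simp add: z_def)
    qed (simp add: z_def \<open>\<epsilon> > 0\<close>)
    ultimately show "dist (f (z j)) (z (Suc j)) \<le> \<delta>"
      using dist_triangle[of "f (z j)" "z (Suc j)" "f (x (a + j))"]
        dist_triangle[of "f (x (a + j))" "z (Suc j)" "x (Suc (a + j))"]
      by (simp add: \<epsilon>_def)
  qed
  have "m \<ge> 1" "z 0 = p" "z m = p" "\<forall>i\<le>m. z i \<in> X"
    using \<open>a < b\<close> pX xX by (auto simp: m_def z_def)
  with small_steps show "\<exists>k\<ge>1. \<exists>z. z 0 = p \<and> z k = p \<and> (\<forall>i\<le>k. z i \<in> X) \<and>
      (\<forall>i<k. dist (f (z i)) (z (Suc i)) \<le> \<delta>)"
    by (intro exI[of _ m] conjI exI[of _ z]) simp_all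
qed

lemma chain_recurrent_set_nonempty:
  assumes "compact X" "continuous_on X f" "f ` X \<subseteq> X" "X \<noteq> {}"
  shows "chain_recurrent_set X f \<noteq> {}"
proof -
  obtain x0 where "x0 \<in> X" using assms(4) by blast
  define x where "x = (\<lambda>i. (f ^^ i) x0)"
  have xX: "x i \<in> X" for i
    unfolding x_def by (induction i) (use \<open>x0 \<in> X\<close> assms(3) in auto)
  have "limit_pseudo_orbit f x" by (simp add: limit_pseudo_orbit_def x_def)
  obtain p s where "p \<in> X" "strict_mono s" "(x \<circ> s) \<longlonglongrightarrow> p"
    using compact_imp_seq_compact[OF assms(1)] xX by (metis seq_compactE)
  then show ?thesis
    using chain_recurrent_if_limit_of_subsequence[OF assms(2) xX \<open>limit_pseudo_orbit f x\<close>] by blast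
qed

lemma limit_pseudo_orbit_infdist_chain_recurrent:
  assumes "compact X" and cont: "continuous_on X f" and xX: "\<And>i. x i \<in> X"
    and po: "limit_pseudo_orbit f x"
  shows "(\<lambda>i. infdist (x i) (chain_recurrent_set X f)) \<longlonglongrightarrow> 0"
proof (rule ccontr)
  let ?d = "\<lambda>i. infdist (x i) (chain_recurrent_set X f)"
  assume "\<not> ?d \<longlonglongrightarrow> 0"
  then obtain e where "e > 0" and "\<not> (\<exists>N. \<forall>i\<ge>N. dist (?d i) 0 < e)"
    unfolding tendsto_iff eventually_sequentially by blast
  then have inf: "infinite {i. e \<le> ?d i}"
    unfolding infinite_nat_iff_unbounded_le by (auto simp: not_less infdist_nonneg)
  obtain r :: "nat \<Rightarrow> nat" where r: "strict_mono r" "\<forall>n. e \<le> ?d (r n)"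
    using infinite_enumerate[OF inf] by auto
  have "\<forall>n. (x \<circ> r) n \<in> X" using xX by simp
  then obtain p and t :: "nat \<Rightarrow> nat" where "p \<in> X" "strict_mono t" and lim: "(x \<circ> r \<circ> t) \<longlonglongrightarrow> p"
    by (rule seq_compactE[OF compact_imp_seq_compact[OF \<open>compact X\<close>]])
  have "(x \<circ> (r \<circ> t)) \<longlonglongrightarrow> p" using lim by (simp add: comp_assoc)
  from chain_recurrent_if_limit_of_subsequence[OF cont xX po
      strict_mono_o[OF r(1) \<open>strict_mono t\<close>] this \<open>p \<in> X\<close>]
  have pCR: "p \<in> chain_recurrent_set X f" .
  obtain K where "\<forall>n\<ge>K. dist ((x \<circ> r \<circ> t) n) p < e"
    using lim \<open>e > 0\<close> unfolding lim_sequentially by blast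
  then have "dist (x (r (t K))) p < e" by simp
  then show False
    using spec[OF r(2), of "t K"] infdist_le[OF pCR, of "x (r (t K))"] by linarith
qed

lemma infdist_tendsto_zeroE:
  assumes "S \<noteq> {}" "(\<lambda>i. infdist (x i) S) \<longlonglongrightarrow> 0"
  obtains z where "\<And>i. z i \<in> S" "(\<lambda>i. dist (x i) (z i)) \<longlonglongrightarrow> 0"
proof -
  have "\<forall>i. \<exists>w. w \<in> S \<and> dist (x i) w < infdist (x i) S + inverse (real (Suc i))"
    using infdist_lessE[OF assms(1)] by (metis less_add_same_cancel1 inverse_positive_iff_positive
      of_nat_0_less_iff zero_less_Suc)
  then obtain z where z: "\<And>i. z i \<in> S"
    and zd: "\<And>i. dist (x i) (z i) < infdist (x i) S + inverse (real (Suc i))"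
    by metis
  have "(\<lambda>i. dist (x i) (z i)) \<longlonglongrightarrow> 0"
  proof (rule real_tendsto_sandwich[of "\<lambda>_. 0" _ _ "\<lambda>i. infdist (x i) S + inverse (real (Suc i))"])
    show "(\<lambda>i. infdist (x i) S + inverse (real (Suc i))) \<longlonglongrightarrow> 0"
      using tendsto_add_zero[OF assms(2) LIMSEQ_inverse_real_of_nat] .
  qed (use zd less_imp_le in \<open>auto intro: always_eventually\<close>)
  with z that show ?thesis by blast
qed

lemma limit_pseudo_orbit_if_asymptotic:
  assumes "uniformly_continuous_on X f" "\<And>i. x i \<in> X" "\<And>i. z i \<in> X"
    and "limit_pseudo_orbit f x" and xz: "(\<lambda>i. dist (x i) (z i)) \<longlonglongrightarrow> 0"
  shows "limit_pseudo_orbit f z"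
proof -
  have "(\<lambda>i. dist (z i) (x i)) \<longlonglongrightarrow> 0" using xz by (simp add: dist_commute)
  then have "(\<lambda>i. dist (f (z i)) (f (x i))) \<longlonglongrightarrow> 0"
    using assms(1-3) unfolding uniformly_continuous_on_sequentially by blast
  moreover have "(\<lambda>i. dist (f (x i)) (x (Suc i))) \<longlonglongrightarrow> 0"
    using assms(4) unfolding limit_pseudo_orbit_def .
  ultimately have "(\<lambda>i. dist (f (z i)) (x (Suc i))) \<longlonglongrightarrow> 0"
    by (rule tendsto_dist_zero_trans)
  then show ?thesis
    unfolding limit_pseudo_orbit_def using LIMSEQ_Suc[OF xz] by (rule tendsto_dist_zero_trans)
qed

theorem lemma3p4:
  fixes X :: "'a::metric_space set" and f :: "'a \<Rightarrow> 'a"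
  assumes "compact X"
    and "continuous_on X f"
    and "f ` X \<subseteq> X"
    and "limit_shadowing_around X f (chain_recurrent_set X f)"
  shows "limit_shadowing X f"
  unfolding limit_shadowing_def limit_shadowing_around_def
proof (intro allI impI)
  let ?CR = "chain_recurrent_set X f"
  fix x assume x: "(\<forall>i. x i \<in> X) \<and> limit_pseudo_orbit f x"
  have "?CR \<noteq> {}" using chain_recurrent_set_nonempty[OF assms(1-3)] x by blast
  moreover have "(\<lambda>i. infdist (x i) ?CR) \<longlonglongrightarrow> 0"
    using limit_pseudo_orbit_infdist_chain_recurrent[OF assms(1,2)] x by blast
  ultimately obtain z where zCR: "\<And>i. z i \<in> ?CR" and xz: "(\<lambda>i. dist (x i) (z i)) \<longlonglongrightarrow> 0"
    using infdist_tendsto_zeroE by blast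
  have "?CR \<subseteq> X" unfolding chain_recurrent_set_def by auto
  then have "limit_pseudo_orbit f z"
    using limit_pseudo_orbit_if_asymptotic[OF compact_uniformly_continuous[OF assms(2,1)]] x zCR xz
    by blast
  then obtain y where "y \<in> X" and "(\<lambda>i. dist (z i) ((f ^^ i) y)) \<longlonglongrightarrow> 0"
    using assms(4) zCR unfolding limit_shadowing_around_def by blast
  then show "\<exists>y\<in>X. (\<lambda>i. dist (x i) ((f ^^ i) y)) \<longlonglongrightarrow> 0"
    using tendsto_dist_zero_trans[OF xz] by (intro bexI)
qed

end
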